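(* For every instance $I$ of University Dual Admission, the associated hypergraph $\mathcal{H}_I$ is a network hypergraph; in particular its incidence matrix is totally unimodular.
   Context: UDA instance: universities $U$, disjoint program sets $P_i$ for each $u_i\in U$ ($P=\bigcup_i P_i$), students $S$; an acceptable triple is $(s_j,u_i,p_{ik})$ with $p_{ik}\in P_i$ acceptable to student $s_j$. The associated hypergraph $\mathcal{H}_I$ has vertex set $S\cup U\cup P$ and one hyperedge $\{s_j,u_i,p_{ik}\}$ for each acceptable triple. The incidence matrix of a hypergraph $(V,\mathcal{E})$ is the $|V|\times|\mathcal{E}|$ 0/1 matrix with entry 1 at $(v,e)$ iff $v\in e$. A matrix $A$ is a network matrix if there is a directed graph $D=(V,E)$ and $F\subseteq E$ forming a spanning tree of $D$ in the undirected sense, such that rows of $A$ are indexed by $F$, columns by $E\setminus F$, and the entry at $(f,e)$ is $1$ if $f$ lies on the unique (undirected) cycle $C_{e,f}$ of $F\cup\{e\}$ with the same orientation as $e$ along it, $-1$ if it lies on it with opposite orientation, and $0$ if $f$ is not on it. A hypergraph is a network hypergraph if its incidence matrix is a network matrix. *)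

theory Defs
  imports "Jordan_Normal_Form.Determinant"
begin

text \<open>Vertices and arcs are labelled by natural numbers
  (any finite digraph can be relabelled this way).  An undirected walk is a
  list of steps (a, d): arc a traversed forwards (d = True, tail to head) or
  backwards (d = False, head to tail).\<close>

definition step_start :: "(nat \<Rightarrow> nat) \<Rightarrow> (nat \<Rightarrow> nat) \<Rightarrow> nat \<times> bool \<Rightarrow> nat" where
  "step_start ta he s = (if snd s then ta (fst s) else he (fst s))"

definition step_end :: "(nat \<Rightarrow> nat) \<Rightarrow> (nat \<Rightarrow> nat) \<Rightarrow> nat \<times> bool \<Rightarrow> nat" where
  "step_end ta he s = (if snd s then he (fst s) else ta (fst s))"

fun is_walk :: "(nat \<Rightarrow> nat) \<Rightarrow> (nat \<Rightarrow> nat) \<Rightarrow> nat set \<Rightarrow> nat \<Rightarrow> (nat \<times> bool) list \<Rightarrow> nat \<Rightarrow> bool" where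
  "is_walk ta he F x [] y = (x = y)"
| "is_walk ta he F x (s # w) y =
     (fst s \<in> F \<and> step_start ta he s = x \<and> is_walk ta he F (step_end ta he s) w y)"

fun walk_verts :: "(nat \<Rightarrow> nat) \<Rightarrow> (nat \<Rightarrow> nat) \<Rightarrow> nat \<Rightarrow> (nat \<times> bool) list \<Rightarrow> nat list" where
  "walk_verts ta he x [] = [x]"
| "walk_verts ta he x (s # w) = x # walk_verts ta he (step_end ta he s) w"

definition is_simple_path :: "(nat \<Rightarrow> nat) \<Rightarrow> (nat \<Rightarrow> nat) \<Rightarrow> nat set \<Rightarrow> nat \<Rightarrow> (nat \<times> bool) list \<Rightarrow> nat \<Rightarrow> bool" where
  "is_simple_path ta he F x w y \<longleftrightarrow> is_walk ta he F x w y \<and> distinct (walk_verts ta he x w)"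

text \<open>Undirected cycle: nonempty closed walk with pairwise distinct arcs and with
  pairwise distinct vertices apart from the repeated start/end vertex.
  (Loops and pairs of parallel/antiparallel arcs count as cycles.)\<close>
definition has_cycle :: "(nat \<Rightarrow> nat) \<Rightarrow> (nat \<Rightarrow> nat) \<Rightarrow> nat set \<Rightarrow> bool" where
  "has_cycle ta he F \<longleftrightarrow> (\<exists>x w. w \<noteq> [] \<and> is_walk ta he F x w x \<and>
      distinct (map fst w) \<and> distinct (butlast (walk_verts ta he x w)))"

definition digraph :: "nat set \<Rightarrow> nat set \<Rightarrow> (nat \<Rightarrow> nat) \<Rightarrow> (nat \<Rightarrow> nat) \<Rightarrow> bool" where
  "digraph Vs Es ta he \<longleftrightarrow> finite Vs \<and> finite Es \<and> (\<forall>a\<in>Es. ta a \<in> Vs \<and> he a \<in> Vs)"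

definition spanning_tree :: "nat set \<Rightarrow> nat set \<Rightarrow> (nat \<Rightarrow> nat) \<Rightarrow> (nat \<Rightarrow> nat) \<Rightarrow> nat set \<Rightarrow> bool" where
  "spanning_tree Vs Es ta he F \<longleftrightarrow> F \<subseteq> Es \<and>
     (\<forall>x\<in>Vs. \<forall>y\<in>Vs. \<exists>w. is_walk ta he F x w y) \<and> \<not> has_cycle ta he F"

text \<open>M is a network matrix if there are a digraph D = (Vs, Es) and a
  spanning tree F of D, together with bijections identifying the rows with F and
  the columns with Es - F, such that the entry at (f, e) is +1 / -1 / 0 according
  as f lies on the unique cycle C_{e,f} of F + e with the same orientation as e /
  opposite orientation / not at all.  Traversing that cycle in the direction of e
  means: e from tail e to head e, then the tree path from head e back to tail e;
  hence f has the orientation of e iff it is traversed forwards on the (unique)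
  simple tree path from head e to tail e.\<close>

definition network_matrix :: "'r set \<Rightarrow> 'c set \<Rightarrow> ('r \<Rightarrow> 'c \<Rightarrow> int) \<Rightarrow> bool" where
  "network_matrix R C M \<longleftrightarrow>
    (\<exists>(Vs::nat set) (Es::nat set) (ta::nat \<Rightarrow> nat) (he::nat \<Rightarrow> nat) (F::nat set)
       (\<rho>::'r \<Rightarrow> nat) (\<gamma>::'c \<Rightarrow> nat).
       digraph Vs Es ta he \<and> spanning_tree Vs Es ta he F \<and>
       bij_betw \<rho> R F \<and> bij_betw \<gamma> C (Es - F) \<and>
       (\<forall>c\<in>C. \<exists>p. is_simple_path ta he F (he (\<gamma> c)) p (ta (\<gamma> c)) \<and>
          (\<forall>r\<in>R. M r c = (if (\<rho> r, True) \<in> set p then 1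
                            else if (\<rho> r, False) \<in> set p then -1 else 0))))"

definition totally_unimodular :: "'r set \<Rightarrow> 'c set \<Rightarrow> ('r \<Rightarrow> 'c \<Rightarrow> int) \<Rightarrow> bool" where
  "totally_unimodular R C M \<longleftrightarrow>
    (\<forall>rs cs. distinct rs \<and> distinct cs \<and> length rs = length cs \<and>
        set rs \<subseteq> R \<and> set cs \<subseteq> C \<longrightarrow>
        det (mat (length rs) (length cs) (\<lambda>(i, j). M (rs ! i) (cs ! j))) \<in> {-1, 0, 1})"

definition incidence_matrix :: "'v set \<Rightarrow> 'v set set \<Rightarrow> 'v \<Rightarrow> 'v set \<Rightarrow> int" where
  "incidence_matrix V E = (\<lambda>v e. if v \<in> e then 1 else 0)"

definition network_hypergraph :: "'v set \<Rightarrow> 'v set set \<Rightarrow> bool" where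
  "network_hypergraph V E \<longleftrightarrow> network_matrix V E (incidence_matrix V E)"

definition uda_instance :: "'s set \<Rightarrow> 'u set \<Rightarrow> ('u \<Rightarrow> 'p set) \<Rightarrow> ('s \<times> 'u \<times> 'p) set \<Rightarrow> bool" where
  "uda_instance S U P A \<longleftrightarrow> finite S \<and> finite U \<and> (\<forall>u\<in>U. finite (P u)) \<and>
     (\<forall>u\<in>U. \<forall>u'\<in>U. u \<noteq> u' \<longrightarrow> P u \<inter> P u' = {}) \<and>
     A \<subseteq> {(s, u, p). s \<in> S \<and> u \<in> U \<and> p \<in> P u}"

definition uda_vertices :: "'s set \<Rightarrow> 'u set \<Rightarrow> ('u \<Rightarrow> 'p set) \<Rightarrow> ('s + 'u + 'p) set" where
  "uda_vertices S U P = Inl ` S \<union> (Inr \<circ> Inl) ` U \<union> (Inr \<circ> Inr) ` (\<Union>u\<in>U. P u)"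

definition uda_hyperedge :: "'s \<times> 'u \<times> 'p \<Rightarrow> ('s + 'u + 'p) set" where
  "uda_hyperedge t = (case t of (s, u, p) \<Rightarrow> {Inl s, Inr (Inl u), Inr (Inr p)})"

definition uda_hyperedges :: "('s \<times> 'u \<times> 'p) set \<Rightarrow> ('s + 'u + 'p) set set" where
  "uda_hyperedges A = uda_hyperedge ` A"

end

theory Submission
  imports Defs
begin

text \<open>
  The digraph has a root r, an arc r \<rightarrow> s for every student s, an arc u \<rightarrow> r for every
  university u and an arc p \<rightarrow> u for every programme p of u; these arcs form a spanning tree.
  The non-tree arc s \<rightarrow> p of a triple (s, u, p) closes the cycle s \<rightarrow> p \<rightarrow> u \<rightarrow> r \<rightarrow> s, which
  traverses exactly the tree arcs of s, u and p, all forwards; so the incidence matrix of the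
  hypergraph is the network matrix of this tree.

  Total unimodularity is checked on square submatrices directly.  Subtracting every programme
  row from the row of its university is the multiplication by 1 - N with N * N = 0, which has
  determinant \<plusminus>1.  Afterwards every column has at most one nonzero student entry and at most
  one other nonzero entry, all equal to 1; negating the student rows gives a matrix whose columns
  have at most one +1 and one -1.  Such a matrix has determinant 0 or \<plusminus>1 by induction: either
  some column has at most one nonzero entry and we expand along it, or the signed rows sum to 0.
\<close>

section \<open>Determinants of signed incidence matrices\<close>

text \<open>After multiplying row i by \<sigma> i, every column has at most one entry 1 and at most one
  entry -1, as in the incidence matrix of a digraph.\<close>
definition signed_incidence_mat :: "(nat \<Rightarrow> int) \<Rightarrow> int mat \<Rightarrow> bool" where
  "signed_incidence_mat \<sigma> M \<longleftrightarrow>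
     (\<forall>i<dim_row M. \<sigma> i \<in> {-1, 1}) \<and>
     (\<forall>i<dim_row M. \<forall>j<dim_col M. M $$ (i, j) \<in> {-1, 0, 1}) \<and>
     (\<forall>j<dim_col M. \<forall>i<dim_row M. \<forall>i'<dim_row M. i \<noteq> i' \<and> M $$ (i, j) \<noteq> 0 \<and> M $$ (i', j) \<noteq> 0
        \<longrightarrow> \<sigma> i * M $$ (i, j) + \<sigma> i' * M $$ (i', j) = 0)"

lemma signed_incidence_matD:
  assumes "signed_incidence_mat \<sigma> M"
  shows "i < dim_row M \<Longrightarrow> \<sigma> i \<in> {-1, 1}"
    and "i < dim_row M \<Longrightarrow> j < dim_col M \<Longrightarrow> M $$ (i, j) \<in> {-1, 0, 1}"
    and "j < dim_col M \<Longrightarrow> i < dim_row M \<Longrightarrow> i' < dim_row M \<Longrightarrow> i \<noteq> i' \<Longrightarrow>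
      M $$ (i, j) \<noteq> 0 \<Longrightarrow> M $$ (i', j) \<noteq> 0 \<Longrightarrow> \<sigma> i * M $$ (i, j) + \<sigma> i' * M $$ (i', j) = 0"
  using assms unfolding signed_incidence_mat_def by blast+

lemma insert_index_less_Suc: "i < Suc n \<Longrightarrow> k < n \<Longrightarrow> insert_index i k < Suc n"
  by (simp add: insert_index_def)

lemma signed_incidence_mat_delete:
  assumes M: "signed_incidence_mat \<sigma> M" "M \<in> carrier_mat (Suc n) (Suc n)"
    and i: "i < Suc n" and j: "j < Suc n"
  shows "signed_incidence_mat (\<sigma> \<circ> insert_index i) (mat_delete M i j)"
proof -
  have entry: "mat_delete M i j $$ (k, l) = M $$ (insert_index i k, insert_index j l)"
    if "k < n" "l < n" for k l
    using mat_delete_index[OF M(2) i j that] by simp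
  show ?thesis
    using M(1) M(2) i j unfolding signed_incidence_mat_def
    by (simp add: entry insert_index_less_Suc inj_eq[OF insert_index_inj_on])
qed

lemma signed_incidence_mat_col_support:
  assumes "signed_incidence_mat \<sigma> M" "j < dim_col M"
    and "i < dim_row M" "i' < dim_row M" "k < dim_row M"
    and "i \<noteq> i'" "M $$ (i, j) \<noteq> 0" "M $$ (i', j) \<noteq> 0" "k \<noteq> i" "k \<noteq> i'"
  shows "M $$ (k, j) = 0"
proof (rule ccontr)
  assume "M $$ (k, j) \<noteq> 0"
  with assms have "\<sigma> k * M $$ (k, j) + \<sigma> i * M $$ (i, j) = 0"
    "\<sigma> k * M $$ (k, j) + \<sigma> i' * M $$ (i', j) = 0"
    "\<sigma> i * M $$ (i, j) + \<sigma> i' * M $$ (i', j) = 0"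
    using signed_incidence_matD(3)[OF assms(1) assms(2)] by blast+
  then have "\<sigma> i * M $$ (i, j) = 0" by linarith
  with assms show False using signed_incidence_matD(1)[OF assms(1) assms(3)] by auto
qed

lemma det_signed_incidence_mat_full_cols:
  assumes M: "signed_incidence_mat \<sigma> M" "M \<in> carrier_mat n n"
    and two: "\<forall>j<n. \<exists>i<n. \<exists>i'<n. i \<noteq> i' \<and> M $$ (i, j) \<noteq> 0 \<and> M $$ (i', j) \<noteq> 0"
    and "n > 0"
  shows "det M = 0"
proof -
  define v where "v = vec n \<sigma>"
  have kernel: "M\<^sup>T *\<^sub>v v = 0\<^sub>v n"
  proof (rule eq_vecI)
    fix j assume "j < dim_vec (0\<^sub>v n)"
    then have j: "j < n" by simp
    then obtain i i' where ii: "i < n" "i' < n" "i \<noteq> i'" "M $$ (i, j) \<noteq> 0" "M $$ (i', j) \<noteq> 0"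
      using two by blast
    have "(M\<^sup>T *\<^sub>v v) $ j = (\<Sum>k\<in>{0..<n}. M $$ (k, j) * \<sigma> k)"
      using M(2) j unfolding v_def by (simp add: scalar_prod_def)
    also have "\<dots> = (\<Sum>k\<in>{i, i'}. M $$ (k, j) * \<sigma> k)"
    proof (rule sum.mono_neutral_right)
      show "\<forall>k\<in>{0..<n} - {i, i'}. M $$ (k, j) * \<sigma> k = 0"
        using signed_incidence_mat_col_support[OF M(1) _ _ _ _ ii(3-5)] M(2) j ii(1,2) by auto
    qed (use ii in auto)
    also have "\<dots> = \<sigma> i * M $$ (i, j) + \<sigma> i' * M $$ (i', j)"
      using ii by (simp add: mult.commute)
    also have "\<dots> = 0"
      using signed_incidence_matD(3)[OF M(1)] M(2) ii j by simp
    finally show "(M\<^sup>T *\<^sub>v v) $ j = 0\<^sub>v n $ j" using j by simp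
  qed (use M(2) in simp)
  moreover have "v \<noteq> 0\<^sub>v n"
  proof
    assume "v = 0\<^sub>v n"
    then have "\<sigma> 0 = 0" using \<open>n > 0\<close> unfolding v_def by (metis index_vec index_zero_vec(1))
    moreover have "\<sigma> 0 \<in> {-1, 1}" using signed_incidence_matD(1)[OF M(1)] M(2) \<open>n > 0\<close> by simp
    ultimately show False by simp
  qed
  moreover have "v \<in> carrier_vec n" unfolding v_def by simp
  ultimately have "det M\<^sup>T = 0"
    using det_0_iff_vec_prod_zero[of "M\<^sup>T" n] M(2) kernel by auto
  then show ?thesis using det_transpose[OF M(2)] by simp
qed

lemma det_col_single_nonzero:
  fixes A :: "'a :: comm_ring_1 mat"
  assumes A: "A \<in> carrier_mat n n" and "i0 < n" "j < n"
    and zero: "\<And>i. i < n \<Longrightarrow> i \<noteq> i0 \<Longrightarrow> A $$ (i, j) = 0"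
  shows "det A = A $$ (i0, j) * cofactor A i0 j"
proof -
  have "det A = (\<Sum>i<n. A $$ (i, j) * cofactor A i j)"
    using laplace_expansion_column[OF A \<open>j < n\<close>] .
  also have "\<dots> = (\<Sum>i\<in>{i0}. A $$ (i, j) * cofactor A i j)"
    using zero \<open>i0 < n\<close> by (intro sum.mono_neutral_right) auto
  finally show ?thesis by simp
qed

lemma det_signed_incidence_mat:
  assumes "signed_incidence_mat \<sigma> M" "M \<in> carrier_mat n n"
  shows "det M \<in> {-1, 0, 1}"
  using assms
proof (induction n arbitrary: M \<sigma>)
  case 0
  then show ?case by (simp add: det_def)
next
  case (Suc n)
  show ?case
  proof (cases "\<forall>j<Suc n. \<exists>i<Suc n. \<exists>i'<Suc n. i \<noteq> i' \<and> M $$ (i, j) \<noteq> 0 \<and> M $$ (i', j) \<noteq> 0")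
    case True
    then show ?thesis using det_signed_incidence_mat_full_cols[OF Suc.prems True] by simp
  next
    case False
    then obtain j where j: "j < Suc n"
      and unique: "\<And>i i'. i < Suc n \<Longrightarrow> i' < Suc n \<Longrightarrow> M $$ (i, j) \<noteq> 0 \<Longrightarrow> M $$ (i', j) \<noteq> 0 \<Longrightarrow> i = i'"
      by blast
    obtain i0 where i0: "i0 < Suc n" and zero: "\<And>i. i < Suc n \<Longrightarrow> i \<noteq> i0 \<Longrightarrow> M $$ (i, j) = 0"
      using unique by (metis zero_less_Suc)
    have "det (mat_delete M i0 j) \<in> {-1, 0, 1}"
      using Suc.IH[OF signed_incidence_mat_delete[OF Suc.prems i0 j]] mat_delete_carrier[OF Suc.prems(2)]
      by simp
    moreover have "M $$ (i0, j) \<in> {-1, 0, 1}"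
      using signed_incidence_matD(2)[OF Suc.prems(1)] Suc.prems(2) i0 j by simp
    moreover have "(-1 :: int) ^ (i0 + j) \<in> {-1, 1}"
      by (cases "even (i0 + j)") auto
    ultimately show ?thesis
      using det_col_single_nonzero[OF Suc.prems(2) i0 j zero] by (auto simp: cofactor_def)
  qed
qed

lemma det_one_minus_square_zero:
  fixes N :: "int mat"
  assumes N: "N \<in> carrier_mat n n" and sq: "N * N = 0\<^sub>m n n"
  shows "det (1\<^sub>m n - N) \<in> {-1, 1}"
proof -
  have "(1\<^sub>m n - N) * (1\<^sub>m n + N) = 1\<^sub>m n * (1\<^sub>m n + N) - N * (1\<^sub>m n + N)"
    using N by (intro minus_mult_distrib_mat) auto
  also have "\<dots> = (1\<^sub>m n + N) - (N * 1\<^sub>m n + N * N)"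
    using N mult_add_distrib_mat[OF N one_carrier_mat N] by simp
  also have "\<dots> = 1\<^sub>m n"
    using N sq by (intro eq_matI) auto
  finally have "det (1\<^sub>m n - N) * det (1\<^sub>m n + N) = 1"
    using det_mult[of "1\<^sub>m n - N" n "1\<^sub>m n + N"] N by (simp add: minus_carrier_mat)
  then show ?thesis by (auto simp: zmult_eq_1_iff)
qed

lemma sum_nth_indicator_distinct:
  assumes "distinct xs"
  shows "(\<Sum>k<length xs. if xs ! k = x then 1 else 0 :: int) = (if x \<in> set xs then 1 else 0)"
proof (cases "x \<in> set xs")
  case True
  then obtain k0 where k0: "k0 < length xs" "xs ! k0 = x" by (auto simp: in_set_conv_nth)
  have "(\<Sum>k<length xs. if xs ! k = x then 1 else 0 :: int) = (\<Sum>k<length xs. if k = k0 then 1 else 0)"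
    using k0 assms nth_eq_iff_index_eq by (intro sum.cong) auto
  then show ?thesis using k0 True by simp
next
  case False
  then show ?thesis by (auto simp: in_set_conv_nth intro!: sum.neutral)
qed

lemma uda_instance_triple:
  "uda_instance S U P A \<Longrightarrow> (s, u, p) \<in> A \<Longrightarrow> s \<in> S \<and> u \<in> U \<and> p \<in> P u"
  unfolding uda_instance_def by auto

lemma uda_instance_university_unique:
  "uda_instance S U P A \<Longrightarrow> u \<in> U \<Longrightarrow> u' \<in> U \<Longrightarrow> p \<in> P u \<Longrightarrow> p \<in> P u' \<Longrightarrow> u = u'"
  unfolding uda_instance_def by blast

lemma in_uda_vertices_iff [simp]:
  "Inl s \<in> uda_vertices S U P \<longleftrightarrow> s \<in> S"
  "Inr (Inl u) \<in> uda_vertices S U P \<longleftrightarrow> u \<in> U"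
  "Inr (Inr p) \<in> uda_vertices S U P \<longleftrightarrow> (\<exists>u\<in>U. p \<in> P u)"
  unfolding uda_vertices_def by auto

lemma finite_uda_vertices: "uda_instance S U P A \<Longrightarrow> finite (uda_vertices S U P)"
  unfolding uda_instance_def uda_vertices_def by auto

lemma finite_uda_hyperedges: "uda_instance S U P A \<Longrightarrow> finite (uda_hyperedges A)"
proof -
  assume I: "uda_instance S U P A"
  then have "A \<subseteq> S \<times> U \<times> (\<Union>u\<in>U. P u)" "finite (S \<times> U \<times> (\<Union>u\<in>U. P u))"
    unfolding uda_instance_def by auto
  then show ?thesis unfolding uda_hyperedges_def by (metis finite_imageI finite_subset)
qed

section \<open>Total unimodularity of the UDA hypergraph\<close>

definition uda_offers :: "('u \<Rightarrow> 'p set) \<Rightarrow> 's + 'u + 'p \<Rightarrow> 's + 'u + 'p \<Rightarrow> bool" where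
  "uda_offers P v w \<longleftrightarrow> (\<exists>u p. v = Inr (Inl u) \<and> w = Inr (Inr p) \<and> p \<in> P u)"

definition offers_mat :: "('u \<Rightarrow> 'p set) \<Rightarrow> ('s + 'u + 'p) list \<Rightarrow> int mat" where
  "offers_mat P rs = mat (length rs) (length rs) (\<lambda>(i, k). if uda_offers P (rs ! i) (rs ! k) then 1 else 0)"

lemma offers_mat_square_zero:
  "offers_mat P rs * offers_mat P rs = 0\<^sub>m (length rs) (length rs)"
  by (intro eq_matI) (auto simp: offers_mat_def uda_offers_def scalar_prod_def intro!: sum.neutral)

lemma uda_offers_hyperedge_iff:
  assumes I: "uda_instance S U P A" and "(s, u, p) \<in> A" "v \<in> uda_vertices S U P"
  shows "uda_offers P v w \<and> w \<in> uda_hyperedge (s, u, p) \<longleftrightarrow> v = Inr (Inl u) \<and> w = Inr (Inr p)"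
  using assms uda_instance_triple[OF I] uda_instance_university_unique[OF I]
  unfolding uda_offers_def uda_vertices_def uda_hyperedge_def by auto

definition incidence_block :: "('s + 'u + 'p) list \<Rightarrow> ('s \<times> 'u \<times> 'p) list \<Rightarrow> int mat" where
  "incidence_block rs ts =
     mat (length rs) (length ts) (\<lambda>(i, j). if rs ! i \<in> uda_hyperedge (ts ! j) then 1 else 0)"

definition reduced_entry :: "('s + 'u + 'p) list \<Rightarrow> 's + 'u + 'p \<Rightarrow> 's \<times> 'u \<times> 'p \<Rightarrow> int" where
  "reduced_entry rs v t = (case t of (s, u, p) \<Rightarrow>
     if v = Inl s \<or> v = Inr (Inr p) \<or> (v = Inr (Inl u) \<and> Inr (Inr p) \<notin> set rs) then 1 else 0)"

lemma offers_mat_mult_incidence_block: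
  assumes I: "uda_instance S U P A" and rs: "distinct rs" "set rs \<subseteq> uda_vertices S U P"
    and ts: "set ts \<subseteq> A" and i: "i < length rs" and j: "j < length ts"
  shows "(offers_mat P rs * incidence_block rs ts) $$ (i, j) =
    (case ts ! j of (s, u, p) \<Rightarrow> if rs ! i = Inr (Inl u) \<and> Inr (Inr p) \<in> set rs then 1 else 0)"
proof -
  obtain s u p where t: "ts ! j = (s, u, p)" by (cases "ts ! j") auto
  have tA: "(s, u, p) \<in> A" using ts j t nth_mem by fastforce
  have vi: "rs ! i \<in> uda_vertices S U P" using rs i by auto
  have "(offers_mat P rs * incidence_block rs ts) $$ (i, j) =
      (\<Sum>k<length rs. if uda_offers P (rs ! i) (rs ! k) \<and> rs ! k \<in> uda_hyperedge (s, u, p) then 1 else 0)"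
    using i j t by (auto simp: offers_mat_def incidence_block_def scalar_prod_def atLeast0LessThan
        intro!: sum.cong)
  also have "\<dots> = (\<Sum>k<length rs. if rs ! i = Inr (Inl u) then (if rs ! k = Inr (Inr p) then 1 else 0) else 0)"
    using uda_offers_hyperedge_iff[OF I tA vi] by (intro sum.cong) auto
  also have "\<dots> = (if rs ! i = Inr (Inl u) \<and> Inr (Inr p) \<in> set rs then 1 else 0)"
    using sum_nth_indicator_distinct[OF rs(1)] by (cases "rs ! i = Inr (Inl u)") simp_all
  finally show ?thesis using t by simp
qed

lemma reduced_incidence_block:
  assumes I: "uda_instance S U P A" and rs: "distinct rs" "set rs \<subseteq> uda_vertices S U P"
    and ts: "set ts \<subseteq> A" and i: "i < length rs" and j: "j < length ts"
  shows "((1\<^sub>m (length rs) - offers_mat P rs) * incidence_block rs ts) $$ (i, j) = reduced_entry rs (rs ! i) (ts ! j)"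
proof -
  let ?n = "length rs" and ?N = "offers_mat P rs" and ?B = "incidence_block rs ts"
  have "(1\<^sub>m ?n - ?N) * ?B = ?B - ?N * ?B"
    using minus_mult_distrib_mat[of "1\<^sub>m ?n" ?n ?n ?N ?B "length ts"]
    by (simp add: offers_mat_def incidence_block_def)
  then show ?thesis
    using offers_mat_mult_incidence_block[OF assms] i j
    by (auto simp: incidence_block_def reduced_entry_def uda_hyperedge_def offers_mat_def split: prod.splits)
qed

lemma reduced_entry_signed_pair:
  assumes "v \<in> set rs" "v' \<in> set rs" "v \<noteq> v'" "reduced_entry rs v t \<noteq> 0" "reduced_entry rs v' t \<noteq> 0"
  shows "(if isl v then -1 else 1) * reduced_entry rs v t + (if isl v' then -1 else 1) * reduced_entry rs v' t = 0"
  using assms by (cases t) (auto simp: reduced_entry_def split: if_splits)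

lemma reduced_incidence_block_signed:
  assumes I: "uda_instance S U P A" and rs: "distinct rs" "set rs \<subseteq> uda_vertices S U P"
    and ts: "set ts \<subseteq> A"
  shows "signed_incidence_mat (\<lambda>i. if isl (rs ! i) then -1 else 1)
    ((1\<^sub>m (length rs) - offers_mat P rs) * incidence_block rs ts)"
proof -
  let ?M = "(1\<^sub>m (length rs) - offers_mat P rs) * incidence_block rs ts"
  have dims: "dim_row ?M = length rs" "dim_col ?M = length ts"
    by (simp_all add: offers_mat_def incidence_block_def)
  note entry = reduced_incidence_block[OF assms]
  show ?thesis
    unfolding signed_incidence_mat_def dims
  proof (intro conjI allI impI)
    fix i j assume "i < length rs" "j < length ts"
    then show "?M $$ (i, j) \<in> {-1, 0, 1}"
      by (auto simp: entry reduced_entry_def split: prod.splits)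
  next
    fix j i i' assume "j < length ts" "i < length rs" "i' < length rs"
      and "i \<noteq> i' \<and> ?M $$ (i, j) \<noteq> 0 \<and> ?M $$ (i', j) \<noteq> 0"
    then show "(if isl (rs ! i) then -1 else 1) * ?M $$ (i, j) + (if isl (rs ! i') then -1 else 1) * ?M $$ (i', j) = 0"
      using reduced_entry_signed_pair[of "rs ! i" rs "rs ! i'"] rs(1)
      by (simp add: entry nth_eq_iff_index_eq)
  qed simp
qed

lemma det_incidence_block:
  assumes I: "uda_instance S U P A" and rs: "distinct rs" "set rs \<subseteq> uda_vertices S U P"
    and ts: "set ts \<subseteq> A" and len: "length ts = length rs"
  shows "det (incidence_block rs ts) \<in> {-1, 0, 1}"
proof -
  let ?n = "length rs" and ?N = "offers_mat P rs" and ?B = "incidence_block rs ts"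
  have N: "?N \<in> carrier_mat ?n ?n" and B: "?B \<in> carrier_mat ?n ?n"
    using len by (simp_all add: offers_mat_def incidence_block_def)
  have "(1\<^sub>m ?n - ?N) * ?B \<in> carrier_mat ?n ?n"
    using N B by (intro mult_carrier_mat minus_carrier_mat) auto
  then have "det ((1\<^sub>m ?n - ?N) * ?B) \<in> {-1, 0, 1}"
    by (rule det_signed_incidence_mat[OF reduced_incidence_block_signed[OF assms(1-4)]])
  moreover have "det (1\<^sub>m ?n - ?N) \<in> {-1, 1}"
    using det_one_minus_square_zero[OF N offers_mat_square_zero] .
  ultimately show ?thesis
    using det_mult[of "1\<^sub>m ?n - ?N" ?n ?B] N B by (auto simp: minus_carrier_mat)
qed

lemma totally_unimodular_uda:
  assumes I: "uda_instance S U P A"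
  shows "totally_unimodular (uda_vertices S U P) (uda_hyperedges A)
    (incidence_matrix (uda_vertices S U P) (uda_hyperedges A))"
  unfolding totally_unimodular_def
proof (intro allI impI, elim conjE)
  fix rs cs
  assume rs: "distinct rs" "set rs \<subseteq> uda_vertices S U P"
    and len: "length rs = length cs" and cs: "set cs \<subseteq> uda_hyperedges A"
  have "cs \<in> lists (uda_hyperedge ` A)" using cs by (auto simp: uda_hyperedges_def)
  then obtain ts where ts: "set ts \<subseteq> A" and cs_ts: "cs = map uda_hyperedge ts"
    unfolding lists_image by auto
  have "mat (length rs) (length cs)
      (\<lambda>(i, j). incidence_matrix (uda_vertices S U P) (uda_hyperedges A) (rs ! i) (cs ! j)) =
    incidence_block rs ts"
    by (intro eq_matI) (auto simp: cs_ts incidence_block_def incidence_matrix_def)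
  then show "det (mat (length rs) (length cs)
      (\<lambda>(i, j). incidence_matrix (uda_vertices S U P) (uda_hyperedges A) (rs ! i) (cs ! j))) \<in> {-1, 0, 1}"
    using det_incidence_block[OF I rs ts] len cs_ts by simp
qed

lemma walk_verts_nth_0: "walk_verts ta he x w ! 0 = x"
  by (cases w) auto

lemma is_walk_nth:
  "is_walk ta he F x w y \<Longrightarrow> i < length w \<Longrightarrow> fst (w ! i) \<in> F \<and>
     step_start ta he (w ! i) = walk_verts ta he x w ! i \<and>
     step_end ta he (w ! i) = walk_verts ta he x w ! Suc i"
proof (induction w arbitrary: x i)
  case (Cons st w)
  then show ?case by (cases i) (auto simp: walk_verts_nth_0)
qed simp

lemma walk_verts_nth_length: "is_walk ta he F x w y \<Longrightarrow> walk_verts ta he x w ! length w = y"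
  by (induction w arbitrary: x) auto

lemma is_walk_append:
  "is_walk ta he F x w y \<Longrightarrow> is_walk ta he F y w' z \<Longrightarrow> is_walk ta he F x (w @ w') z"
  by (induction w arbitrary: x) auto

lemma is_walk_rev:
  "is_walk ta he F x w y \<Longrightarrow> is_walk ta he F y (rev (map (\<lambda>(a, d). (a, \<not> d)) w)) x"
proof (induction w arbitrary: x)
  case (Cons st w)
  then show ?case
    by (cases st) (auto intro!: is_walk_append simp: step_start_def step_end_def)
qed simp

lemma parent_arc_step:
  assumes parent: "\<forall>a\<in>F. (d (ta a) = Suc (d (he a)) \<and> own (ta a) = a) \<or>
      (d (he a) = Suc (d (ta a)) \<and> own (he a) = a)"
    and "fst st \<in> F"
  shows "d (step_end ta he st) \<le> d (step_start ta he st) \<Longrightarrow> own (step_start ta he st) = fst st"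
    and "d (step_start ta he st) \<le> d (step_end ta he st) \<Longrightarrow> own (step_end ta he st) = fst st"
    and "step_start ta he st \<noteq> step_end ta he st"
proof -
  obtain a b where st: "st = (a, b)" by (cases st)
  have "(d (ta a) = Suc (d (he a)) \<and> own (ta a) = a) \<or> (d (he a) = Suc (d (ta a)) \<and> own (he a) = a)"
    using parent \<open>fst st \<in> F\<close> st by simp
  then show "d (step_end ta he st) \<le> d (step_start ta he st) \<Longrightarrow> own (step_start ta he st) = fst st"
    and "d (step_start ta he st) \<le> d (step_end ta he st) \<Longrightarrow> own (step_end ta he st) = fst st"
    and "step_start ta he st \<noteq> step_end ta he st"
    using st by (cases b; auto simp: step_start_def step_end_def)+
qed

text \<open>Each arc of F is the parent arc own x of its deeper endpoint x.  On a cycle, a vertex of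
  maximal depth is entered and left through its parent arc, so the cycle uses that arc twice.\<close>
lemma not_has_cycle_if_parent_arcs:
  fixes d own :: "nat \<Rightarrow> nat"
  assumes parent: "\<forall>a\<in>F. (d (ta a) = Suc (d (he a)) \<and> own (ta a) = a) \<or>
      (d (he a) = Suc (d (ta a)) \<and> own (he a) = a)"
  shows "\<not> has_cycle ta he F"
proof
  assume "has_cycle ta he F"
  then obtain x w where "w \<noteq> []" and walk: "is_walk ta he F x w x" and distinct: "distinct (map fst w)"
    unfolding has_cycle_def by blast
  define vs where "vs = walk_verts ta he x w"
  define m where "m = length w"
  have "m > 0" using \<open>w \<noteq> []\<close> m_def by auto
  have closed: "vs ! m = vs ! 0"
    using walk_verts_nth_length[OF walk] walk_verts_nth_0 unfolding vs_def m_def by simp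
  have step: "fst (w ! i) \<in> F \<and> step_start ta he (w ! i) = vs ! i \<and> step_end ta he (w ! i) = vs ! Suc i"
    if "i < m" for i
    using is_walk_nth[OF walk] that unfolding vs_def m_def by simp
  obtain i0 where i0: "i0 < m" and deepest: "\<And>k. k < m \<Longrightarrow> d (vs ! k) \<le> d (vs ! i0)"
  proof -
    let ?D = "(\<lambda>k. d (vs ! k)) ` {..<m}"
    obtain i0 where "i0 < m" "d (vs ! i0) = Max ?D"
      using Max_in[of ?D] \<open>m > 0\<close> by fastforce
    then show thesis using that[of i0] by simp
  qed
  have deepest': "d (vs ! k) \<le> d (vs ! i0)" if "k \<le> m" for k
    using deepest[of k] deepest[of 0] closed \<open>m > 0\<close> that by (cases "k = m") auto
  have own_next: "own (vs ! i0) = fst (w ! i0)"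
    using parent_arc_step(1)[OF parent, of "w ! i0"] step[OF i0] deepest'[of "Suc i0"] i0 by simp
  define j where "j = (if i0 = 0 then m - 1 else i0 - 1)"
  have j: "j < m" and "vs ! Suc j = vs ! i0"
    using i0 closed \<open>m > 0\<close> unfolding j_def by auto
  then have own_prev: "own (vs ! i0) = fst (w ! j)"
    using parent_arc_step(2)[OF parent, of "w ! j"] step[OF j] deepest'[of j] by simp
  have "j = i0"
    using own_next own_prev distinct i0 j nth_eq_iff_index_eq unfolding m_def by fastforce
  then have "i0 = 0" "m = 1"
    using i0 \<open>m > 0\<close> unfolding j_def by (auto split: if_splits)
  then have "step_start ta he (w ! i0) = step_end ta he (w ! i0)"
    using step[OF i0] closed by simp
  then show False using parent_arc_step(3)[OF parent] step[OF i0] by blast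
qed

section \<open>The UDA hypergraph as a network hypergraph\<close>

locale uda_digraph =
  fixes S :: "'s set" and U :: "'u set" and P :: "'u \<Rightarrow> 'p set" and A :: "('s \<times> 'u \<times> 'p) set"
    and vnum :: "'s + 'u + 'p \<Rightarrow> nat" and enum :: "('s + 'u + 'p) set \<Rightarrow> nat"
  assumes inst: "uda_instance S U P A"
    and inj_vnum: "inj_on vnum (uda_vertices S U P)"
    and inj_enum: "inj_on enum (uda_hyperedges A)"
begin

definition node :: "'s + 'u + 'p \<Rightarrow> nat" where
  "node v = Suc (vnum v)"

definition vertex_of :: "nat \<Rightarrow> 's + 'u + 'p" where
  "vertex_of k = inv_into (uda_vertices S U P) vnum (k - 1)"

definition tree_arc :: "'s + 'u + 'p \<Rightarrow> nat" where
  "tree_arc v = 2 * vnum v"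

definition edge_arc :: "('s + 'u + 'p) set \<Rightarrow> nat" where
  "edge_arc h = Suc (2 * enum h)"

definition university_of :: "'p \<Rightarrow> 'u" where
  "university_of p = (SOME u. u \<in> U \<and> p \<in> P u)"

definition tree_tail :: "'s + 'u + 'p \<Rightarrow> nat" where
  "tree_tail v = (case v of Inl _ \<Rightarrow> 0 | Inr _ \<Rightarrow> node v)"

definition tree_head :: "'s + 'u + 'p \<Rightarrow> nat" where
  "tree_head v = (case v of Inl _ \<Rightarrow> node v | Inr (Inl _) \<Rightarrow> 0
     | Inr (Inr p) \<Rightarrow> node (Inr (Inl (university_of p))))"

definition tail :: "nat \<Rightarrow> nat" where
  "tail a = (if even a then tree_tail (inv_into (uda_vertices S U P) vnum (a div 2))
     else node (Inl (THE s. Inl s \<in> inv_into (uda_hyperedges A) enum (a div 2))))"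

definition head :: "nat \<Rightarrow> nat" where
  "head a = (if even a then tree_head (inv_into (uda_vertices S U P) vnum (a div 2))
     else node (Inr (Inr (THE p. Inr (Inr p) \<in> inv_into (uda_hyperedges A) enum (a div 2)))))"

definition nodes :: "nat set" where
  "nodes = insert 0 (node ` uda_vertices S U P)"

definition tree_arcs :: "nat set" where
  "tree_arcs = tree_arc ` uda_vertices S U P"

definition arcs :: "nat set" where
  "arcs = tree_arcs \<union> edge_arc ` uda_hyperedges A"

lemma node_neq_root [simp]: "node v \<noteq> 0"
  by (simp add: node_def)

lemma node_inject:
  "v \<in> uda_vertices S U P \<Longrightarrow> v' \<in> uda_vertices S U P \<Longrightarrow> node v = node v' \<longleftrightarrow> v = v'"
  using inj_vnum by (auto simp: node_def dest: inj_onD)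

lemma tree_arc_inject:
  "v \<in> uda_vertices S U P \<Longrightarrow> v' \<in> uda_vertices S U P \<Longrightarrow> tree_arc v = tree_arc v' \<longleftrightarrow> v = v'"
  using inj_vnum by (auto simp: tree_arc_def dest: inj_onD)

lemma vertex_of_node [simp]: "v \<in> uda_vertices S U P \<Longrightarrow> vertex_of (node v) = v"
  using inj_vnum by (simp add: vertex_of_def node_def)

lemma university_of_eq: "u \<in> U \<Longrightarrow> p \<in> P u \<Longrightarrow> university_of p = u"
  using someI[of "\<lambda>u. u \<in> U \<and> p \<in> P u" u] uda_instance_university_unique[OF inst]
  by (auto simp: university_of_def)

lemma tail_tree_arc [simp]: "v \<in> uda_vertices S U P \<Longrightarrow> tail (tree_arc v) = tree_tail v"
  using inj_vnum by (simp add: tail_def tree_arc_def)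

lemma head_tree_arc [simp]: "v \<in> uda_vertices S U P \<Longrightarrow> head (tree_arc v) = tree_head v"
  using inj_vnum by (simp add: head_def tree_arc_def)

lemma ends_edge_arc:
  assumes "(s, u, p) \<in> A"
  shows "tail (edge_arc (uda_hyperedge (s, u, p))) = node (Inl s)"
    and "head (edge_arc (uda_hyperedge (s, u, p))) = node (Inr (Inr p))"
proof -
  have "uda_hyperedge (s, u, p) \<in> uda_hyperedges A"
    using assms by (simp add: uda_hyperedges_def)
  then show "tail (edge_arc (uda_hyperedge (s, u, p))) = node (Inl s)"
    and "head (edge_arc (uda_hyperedge (s, u, p))) = node (Inr (Inr p))"
    using inj_enum by (simp_all add: tail_def head_def edge_arc_def uda_hyperedge_def)
qed

lemma tree_ends_in_nodes:
  assumes "v \<in> uda_vertices S U P"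
  shows "tree_tail v \<in> nodes" and "tree_head v \<in> nodes"
proof -
  show "tree_tail v \<in> nodes" using assms by (auto simp: tree_tail_def nodes_def split: sum.split)
  show "tree_head v \<in> nodes"
  proof (cases v)
    case (Inr w)
    then show ?thesis
      using assms university_of_eq by (cases w) (auto simp: tree_head_def nodes_def)
  qed (use assms in \<open>auto simp: tree_head_def nodes_def\<close>)
qed

lemma digraph_nodes_arcs: "digraph nodes arcs tail head"
proof -
  have "tail a \<in> nodes \<and> head a \<in> nodes" if "a \<in> arcs" for a
  proof -
    from that consider (tree) v where "v \<in> uda_vertices S U P" "a = tree_arc v"
      | (edge) s u p where "(s, u, p) \<in> A" "a = edge_arc (uda_hyperedge (s, u, p))"
      unfolding arcs_def tree_arcs_def uda_hyperedges_def by auto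
    then show ?thesis
    proof cases
      case tree
      then show ?thesis using tree_ends_in_nodes by simp
    next
      case edge
      then show ?thesis
        using ends_edge_arc uda_instance_triple[OF inst] by (force simp: nodes_def)
    qed
  qed
  moreover have "finite nodes" "finite arcs"
    using finite_uda_vertices[OF inst] finite_uda_hyperedges[OF inst]
    by (simp_all add: nodes_def arcs_def tree_arcs_def)
  ultimately show ?thesis unfolding digraph_def by blast
qed

lemma walk_to_root:
  assumes "v \<in> uda_vertices S U P"
  shows "\<exists>w. is_walk tail head tree_arcs (node v) w 0"
proof (cases v)
  case (Inl s)
  with assms show ?thesis
    by (intro exI[of _ "[(tree_arc v, False)]"])
      (simp add: tree_arcs_def step_start_def step_end_def tree_tail_def tree_head_def)
next
  case (Inr w)
  show ?thesis
  proof (cases w)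
    case (Inl u)
    with Inr assms show ?thesis
      by (intro exI[of _ "[(tree_arc v, True)]"])
        (simp add: tree_arcs_def step_start_def step_end_def tree_tail_def tree_head_def)
  next
    case (Inr p)
    with \<open>v = Inr w\<close> assms obtain u where u: "u \<in> U" "p \<in> P u" by auto
    with Inr \<open>v = Inr w\<close> assms show ?thesis
      by (intro exI[of _ "[(tree_arc v, True), (tree_arc (Inr (Inl u)), True)]"])
        (simp add: tree_arcs_def step_start_def step_end_def tree_tail_def tree_head_def university_of_eq)
  qed
qed

lemma tree_arcs_acyclic: "\<not> has_cycle tail head tree_arcs"
proof -
  define depth :: "nat \<Rightarrow> nat" where
    "depth k = (if k = 0 then 0 else case vertex_of k of Inr (Inr _) \<Rightarrow> 2 | _ \<Rightarrow> 1)" for k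
  have "(depth (tail a) = Suc (depth (head a)) \<and> tree_arc (vertex_of (tail a)) = a) \<or>
      (depth (head a) = Suc (depth (tail a)) \<and> tree_arc (vertex_of (head a)) = a)"
    if a: "a \<in> tree_arcs" for a
  proof -
    obtain v where v: "v \<in> uda_vertices S U P" "a = tree_arc v"
      using a unfolding tree_arcs_def by auto
    show ?thesis
    proof (cases v)
      case (Inr w)
      with v show ?thesis
        using university_of_eq
        by (cases w) (auto simp: depth_def tree_tail_def tree_head_def)
    qed (use v in \<open>simp add: depth_def tree_tail_def tree_head_def\<close>)
  qed
  then show ?thesis
    by (intro not_has_cycle_if_parent_arcs[where d = depth and own = "\<lambda>k. tree_arc (vertex_of k)"]) blast
qed

lemma spanning_tree_tree_arcs: "spanning_tree nodes arcs tail head tree_arcs"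
proof -
  have "\<exists>w. is_walk tail head tree_arcs x w 0" if "x \<in> nodes" for x
    using that walk_to_root by (auto simp: nodes_def intro: exI[of _ "[]"])
  then have "\<exists>w. is_walk tail head tree_arcs x w y" if "x \<in> nodes" "y \<in> nodes" for x y
    using that is_walk_append is_walk_rev by metis
  then show ?thesis
    unfolding spanning_tree_def using tree_arcs_acyclic by (auto simp: arcs_def)
qed

definition tree_path :: "'s \<times> 'u \<times> 'p \<Rightarrow> (nat \<times> bool) list" where
  "tree_path t = (case t of (s, u, p) \<Rightarrow>
     [(tree_arc (Inr (Inr p)), True), (tree_arc (Inr (Inl u)), True), (tree_arc (Inl s), True)])"

lemma tree_path_simple:
  assumes "t \<in> A"
  shows "is_simple_path tail head tree_arcs
    (head (edge_arc (uda_hyperedge t))) (tree_path t) (tail (edge_arc (uda_hyperedge t)))"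
proof -
  obtain s u p where t: "t = (s, u, p)" by (cases t)
  then have V: "Inl s \<in> uda_vertices S U P" "Inr (Inl u) \<in> uda_vertices S U P"
    "Inr (Inr p) \<in> uda_vertices S U P" and "p \<in> P u"
    using uda_instance_triple[OF inst] assms by auto
  then show ?thesis
    using assms node_inject university_of_eq
    by (simp add: t is_simple_path_def tree_path_def ends_edge_arc tree_arcs_def
        step_start_def step_end_def tree_tail_def tree_head_def)
qed

lemma tree_path_arcs:
  assumes "t \<in> A" "r \<in> uda_vertices S U P"
  shows "(tree_arc r, True) \<in> set (tree_path t) \<longleftrightarrow> r \<in> uda_hyperedge t"
    and "(tree_arc r, False) \<notin> set (tree_path t)"
proof -
  obtain s u p where t: "t = (s, u, p)" by (cases t)
  then have "Inl s \<in> uda_vertices S U P" "Inr (Inl u) \<in> uda_vertices S U P"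
    "Inr (Inr p) \<in> uda_vertices S U P"
    using uda_instance_triple[OF inst] assms by auto
  then show "(tree_arc r, True) \<in> set (tree_path t) \<longleftrightarrow> r \<in> uda_hyperedge t"
    using tree_arc_inject assms(2) by (auto simp: t tree_path_def uda_hyperedge_def)
  show "(tree_arc r, False) \<notin> set (tree_path t)"
    by (simp add: t tree_path_def)
qed

lemma network_matrix_incidence:
  "network_matrix (uda_vertices S U P) (uda_hyperedges A)
    (incidence_matrix (uda_vertices S U P) (uda_hyperedges A))"
proof -
  have "bij_betw tree_arc (uda_vertices S U P) tree_arcs"
    using tree_arc_inject by (auto simp: bij_betw_def inj_on_def tree_arcs_def)
  moreover have "bij_betw edge_arc (uda_hyperedges A) (arcs - tree_arcs)"
    using inj_enum by (auto simp: bij_betw_def inj_on_def edge_arc_def arcs_def tree_arcs_def tree_arc_def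
        dest: inj_onD) presburger
  moreover have "\<exists>w. is_simple_path tail head tree_arcs (head (edge_arc c)) w (tail (edge_arc c)) \<and>
      (\<forall>r\<in>uda_vertices S U P. incidence_matrix (uda_vertices S U P) (uda_hyperedges A) r c =
        (if (tree_arc r, True) \<in> set w then 1 else if (tree_arc r, False) \<in> set w then -1 else 0))"
    if c: "c \<in> uda_hyperedges A" for c
  proof -
    obtain t where "t \<in> A" "c = uda_hyperedge t" using c by (auto simp: uda_hyperedges_def)
    then show ?thesis
      using tree_path_simple tree_path_arcs by (intro exI[of _ "tree_path t"]) (simp add: incidence_matrix_def)
  qed
  ultimately show ?thesis
    unfolding network_matrix_def using digraph_nodes_arcs spanning_tree_tree_arcs by blast
qed

end

lemma network_hypergraph_uda:
  fixes S :: "'s set" and U :: "'u set" and P :: "'u \<Rightarrow> 'p set" and A :: "('s \<times> 'u \<times> 'p) set"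
  assumes "uda_instance S U P A"
  shows "network_hypergraph (uda_vertices S U P) (uda_hyperedges A)"
proof -
  obtain vnum :: "'s + 'u + 'p \<Rightarrow> nat" where "inj_on vnum (uda_vertices S U P)"
    using finite_imp_inj_to_nat_seg[OF finite_uda_vertices[OF assms]] by blast
  moreover obtain enum :: "('s + 'u + 'p) set \<Rightarrow> nat" where "inj_on enum (uda_hyperedges A)"
    using finite_imp_inj_to_nat_seg[OF finite_uda_hyperedges[OF assms]] by blast
  ultimately interpret uda_digraph S U P A vnum enum
    using assms by unfold_locales
  show ?thesis
    unfolding network_hypergraph_def by (rule network_matrix_incidence)
qed

theorem theorem3p2:
  fixes S :: "'s set" and U :: "'u set" and P :: "'u \<Rightarrow> 'p set"
    and A :: "('s \<times> 'u \<times> 'p) set"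
  assumes "uda_instance S U P A"
  shows "network_hypergraph (uda_vertices S U P) (uda_hyperedges A)
       \<and> totally_unimodular (uda_vertices S U P) (uda_hyperedges A)
           (incidence_matrix (uda_vertices S U P) (uda_hyperedges A))"
  using network_hypergraph_uda[OF assms] totally_unimodular_uda[OF assms] by blast

end
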